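(* For every integer $m>1$ and positive integers $w,d$ there is a number $\gamma=f(m,w,d)$ such that the following holds. Let $G$ be a connected graph with $\Delta(G)\leq d$, let $(T,\mathcal{Y})$ be a lean tree-decomposition of $G$ of width at most $w$, let $P$ be a path in $T$, and let $t_1,\ldots,t_{\gamma'}$ with $\gamma'\geq\gamma$ be interior vertices of $P$ occurring along $P$ in this order, such that for some positive integer $s$, $|Y_{t_i}|=s$ for all $i$ and $|Y_t|\ge s$ for all $t$ on $P$ between $t_1$ and $t_{\gamma'}$, and $Y_{t_i}\cap Y_{t_j}=U$ for all distinct $i,j$, for a fixed set $U\subseteq V(G)$. Then there is an integer $k\geq 0$ with $k+m\leq\gamma'$ such that $N(U)\cap\big(Y_P[t_{k+1},t_{k+m})\setminus U\big)=\emptyset$.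
   Context: All graphs are finite and loopless but may have parallel edges. A tree-decomposition of $G$ is a pair $(T,\mathcal{Y})$ where $T$ is a tree and $\mathcal{Y}=\{Y_t\}_{t\in V(T)}$ is a family of subsets of $V(G)$ (bags) such that (W1) $\bigcup_{t} Y_t=V(G)$ and every edge of $G$ has both ends in some $Y_t$; and (W2) if $t'$ lies on the path of $T$ between $t$ and $t''$ then $Y_t\cap Y_{t''}\subseteq Y_{t'}$. Its width is $\max_t(|Y_t|-1)$. It is lean if additionally: (W3) for every two vertices $t,t'$ of $T$ and every positive integer $k$, either $G$ has $k$ vertex-disjoint paths between $Y_t$ and $Y_{t'}$, or some vertex $t''$ on the path of $T$ between $t$ and $t'$ has $|Y_{t''}|<k$; (W4) distinct vertices $t\ne t'$ of $T$ have $Y_t\neq Y_{t'}$; (W5) if $t_0\in V(T)$ and $B$ is a component of $T-t_0$, then $\bigcup_{t\in V(B)}Y_t\setminus Y_{t_0}\neq\emptyset$. For vertices $t',t''$ of the path $P$, $P[t',t'']$ is the subpath of $P$ between them, and $Y_P[t',t'')$ is the union of all bags $Y_t$ such that either $t\in V(P[t',t''])$, or $t\in V(T)\setminus V(P)$ and the unique path in $T$ from $t$ to $P$ ends at a vertex of $P[t',t'']-t''$. For $X\subseteq V(G)$, $N(X)$ is the set of vertices not in $X$ adjacent to some vertex of $X$. *)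

theory Defs
  imports Main
begin

definition is_path :: "'a set \<Rightarrow> ('a \<Rightarrow> 'a \<Rightarrow> bool) \<Rightarrow> 'a list \<Rightarrow> bool" where
  "is_path V adj xs \<longleftrightarrow> xs \<noteq> [] \<and> distinct xs \<and> set xs \<subseteq> V \<and>
     (\<forall>i. Suc i < length xs \<longrightarrow> adj (xs ! i) (xs ! Suc i))"

definition path_betw :: "'a set \<Rightarrow> ('a \<Rightarrow> 'a \<Rightarrow> bool) \<Rightarrow> 'a list \<Rightarrow> 'a \<Rightarrow> 'a \<Rightarrow> bool" where
  "path_betw V adj xs a b \<longleftrightarrow> is_path V adj xs \<and> hd xs = a \<and> last xs = b"

definition connected_graph :: "'a set \<Rightarrow> ('a \<Rightarrow> 'a \<Rightarrow> bool) \<Rightarrow> bool" where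
  "connected_graph V adj \<longleftrightarrow> V \<noteq> {} \<and> (\<forall>a\<in>V. \<forall>b\<in>V. \<exists>xs. path_betw V adj xs a b)"

definition is_component :: "'a set \<Rightarrow> ('a \<Rightarrow> 'a \<Rightarrow> bool) \<Rightarrow> 'a set \<Rightarrow> bool" where
  "is_component W adj B \<longleftrightarrow> (\<exists>b\<in>W. B = {x. \<exists>p. path_betw W adj p b x})"

section \<open>Finite loopless multigraphs: vertices V, edges E, ends e = set of the two ends\<close>

definition multigraph :: "'v set \<Rightarrow> 'e set \<Rightarrow> ('e \<Rightarrow> 'v set) \<Rightarrow> bool" where
  "multigraph V E ends \<longleftrightarrow> finite V \<and> finite E \<and> (\<forall>e\<in>E. ends e \<subseteq> V \<and> card (ends e) = 2)"

definition gadj :: "'e set \<Rightarrow> ('e \<Rightarrow> 'v set) \<Rightarrow> 'v \<Rightarrow> 'v \<Rightarrow> bool" where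
  "gadj E ends u v \<longleftrightarrow> (\<exists>e\<in>E. ends e = {u, v})"

text \<open>Degree (parallel edges counted with multiplicity).\<close>
definition degree :: "'e set \<Rightarrow> ('e \<Rightarrow> 'v set) \<Rightarrow> 'v \<Rightarrow> nat" where
  "degree E ends v = card {e\<in>E. v \<in> ends e}"

definition nbhd :: "'v set \<Rightarrow> 'e set \<Rightarrow> ('e \<Rightarrow> 'v set) \<Rightarrow> 'v set \<Rightarrow> 'v set" where
  "nbhd V E ends X = {v \<in> V - X. \<exists>u\<in>X. gadj E ends u v}"

definition has_disj_paths :: "'v set \<Rightarrow> ('v \<Rightarrow> 'v \<Rightarrow> bool) \<Rightarrow> nat \<Rightarrow> 'v set \<Rightarrow> 'v set \<Rightarrow> bool" where
  "has_disj_paths V adj k A B \<longleftrightarrow> (\<exists>ps :: nat \<Rightarrow> 'v list.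
     (\<forall>i<k. \<exists>a\<in>A. \<exists>b\<in>B. path_betw V adj (ps i) a b) \<and>
     (\<forall>i<k. \<forall>j<k. i \<noteq> j \<longrightarrow> set (ps i) \<inter> set (ps j) = {}))"

definition is_tree :: "'t set \<Rightarrow> ('t \<Rightarrow> 't \<Rightarrow> bool) \<Rightarrow> bool" where
  "is_tree VT adjT \<longleftrightarrow> finite VT \<and>
     (\<forall>x y. adjT x y \<longrightarrow> x \<in> VT \<and> y \<in> VT \<and> x \<noteq> y \<and> adjT y x) \<and>
     connected_graph VT adjT \<and>
     \<not> (\<exists>c. is_path VT adjT c \<and> 3 \<le> length c \<and> adjT (last c) (hd c))"

definition tree_decomp :: "'v set \<Rightarrow> 'e set \<Rightarrow> ('e \<Rightarrow> 'v set) \<Rightarrow> 't set \<Rightarrow> ('t \<Rightarrow> 't \<Rightarrow> bool) \<Rightarrow> ('t \<Rightarrow> 'v set) \<Rightarrow> bool" where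
  "tree_decomp V E ends VT adjT Y \<longleftrightarrow> is_tree VT adjT \<and>
     (\<forall>t\<in>VT. Y t \<subseteq> V) \<and>
     (\<Union>t\<in>VT. Y t) = V \<and>
     (\<forall>e\<in>E. \<exists>t\<in>VT. ends e \<subseteq> Y t) \<and>
     (\<forall>t t' t'' p. path_betw VT adjT p t t'' \<and> t' \<in> set p \<longrightarrow> Y t \<inter> Y t'' \<subseteq> Y t')"

definition lean_tree_decomp :: "'v set \<Rightarrow> 'e set \<Rightarrow> ('e \<Rightarrow> 'v set) \<Rightarrow> 't set \<Rightarrow> ('t \<Rightarrow> 't \<Rightarrow> bool) \<Rightarrow> ('t \<Rightarrow> 'v set) \<Rightarrow> bool" where
  "lean_tree_decomp V E ends VT adjT Y \<longleftrightarrow> tree_decomp V E ends VT adjT Y \<and>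
     \<comment> \<open>(W3)\<close>
     (\<forall>t\<in>VT. \<forall>t'\<in>VT. \<forall>k::nat. 0 < k \<longrightarrow>
        has_disj_paths V (gadj E ends) k (Y t) (Y t') \<or>
        (\<exists>p. path_betw VT adjT p t t' \<and> (\<exists>t''\<in>set p. card (Y t'') < k))) \<and>
     \<comment> \<open>(W4)\<close>
     inj_on Y VT \<and>
     \<comment> \<open>(W5)\<close>
     (\<forall>t0\<in>VT. \<forall>B. is_component (VT - {t0}) adjT B \<longrightarrow> (\<Union>t\<in>B. Y t) - Y t0 \<noteq> {})"

text \<open>Y_P[P!a, P!b) for a path P (a list) in T and indices a \<le> b.\<close>
definition YP :: "'t set \<Rightarrow> ('t \<Rightarrow> 't \<Rightarrow> bool) \<Rightarrow> ('t \<Rightarrow> 'v set) \<Rightarrow> 't list \<Rightarrow> nat \<Rightarrow> nat \<Rightarrow> 'v set" where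
  "YP VT adjT Y P a b = (\<Union>j\<in>{a..b}. Y (P ! j)) \<union>
     (\<Union>t\<in>{t. t \<in> VT \<and> t \<notin> set P \<and>
        (\<exists>q j. a \<le> j \<and> j < b \<and> path_betw VT adjT q t (P ! j) \<and> set (butlast q) \<inter> set P = {})}. Y t)"

end

theory Submission
  imports Defs
begin

text \<open>
  The neighbourhood N(U) has at most 2d(w+1) vertices. Cut the sequence t_1, t_2, \<dots> into
  2d(w+1)+1 windows of m consecutive vertices, any two separated by at least two further t_i. A vertex
  of G lying in the parts Y_P of two different windows is, by the tree-decomposition axiom (W2),
  contained in both bags of the separating t_i, hence in their intersection U. So the windows meet
  N(U) - U in pairwise disjoint sets, and by pigeonhole one of them misses N(U) altogether.
\<close>

definition walk :: "'a set \<Rightarrow> ('a \<Rightarrow> 'a \<Rightarrow> bool) \<Rightarrow> 'a list \<Rightarrow> bool" where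
  "walk V adj xs \<longleftrightarrow> xs \<noteq> [] \<and> set xs \<subseteq> V \<and>
     (\<forall>i. Suc i < length xs \<longrightarrow> xs ! i = xs ! Suc i \<or> adj (xs ! i) (xs ! Suc i))"

lemma walk_singleton_iff [simp]: "walk V adj [x] \<longleftrightarrow> x \<in> V"
  by (auto simp: walk_def)

lemma walk_Cons_Cons_iff:
  "walk V adj (x # y # xs) \<longleftrightarrow> x \<in> V \<and> (x = y \<or> adj x y) \<and> walk V adj (y # xs)"
proof
  assume "walk V adj (x # y # xs)"
  then show "x \<in> V \<and> (x = y \<or> adj x y) \<and> walk V adj (y # xs)"
    unfolding walk_def by auto
next
  assume a: "x \<in> V \<and> (x = y \<or> adj x y) \<and> walk V adj (y # xs)"
  show "walk V adj (x # y # xs)" unfolding walk_def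
  proof (intro conjI allI impI)
    fix i assume "Suc i < length (x # y # xs)"
    then show "(x # y # xs) ! i = (x # y # xs) ! Suc i \<or> adj ((x # y # xs) ! i) ((x # y # xs) ! Suc i)"
      using a unfolding walk_def by (cases i) auto
  qed (use a in \<open>auto simp: walk_def\<close>)
qed

lemma is_path_singleton_iff [simp]: "is_path V adj [x] \<longleftrightarrow> x \<in> V"
  by (auto simp: is_path_def)

lemma is_path_Cons_Cons_iff:
  "is_path V adj (x # y # xs) \<longleftrightarrow> x \<in> V \<and> x \<notin> set (y # xs) \<and> adj x y \<and> is_path V adj (y # xs)"
proof
  assume "is_path V adj (x # y # xs)"
  then show "x \<in> V \<and> x \<notin> set (y # xs) \<and> adj x y \<and> is_path V adj (y # xs)"
    unfolding is_path_def by auto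
next
  assume a: "x \<in> V \<and> x \<notin> set (y # xs) \<and> adj x y \<and> is_path V adj (y # xs)"
  show "is_path V adj (x # y # xs)" unfolding is_path_def
  proof (intro conjI allI impI)
    fix i assume "Suc i < length (x # y # xs)"
    then show "adj ((x # y # xs) ! i) ((x # y # xs) ! Suc i)"
      using a unfolding is_path_def by (cases i) auto
  qed (use a in \<open>auto simp: is_path_def\<close>)
qed

lemma is_path_imp_walk: "is_path V adj xs \<Longrightarrow> walk V adj xs"
  by (auto simp: is_path_def walk_def)

lemma walk_append:
  "walk V adj xs \<Longrightarrow> walk V adj ys \<Longrightarrow> last xs = hd ys \<or> adj (last xs) (hd ys) \<Longrightarrow>
    walk V adj (xs @ ys)"
proof (induction xs rule: induct_list012)
  case 1 then show ?case by (simp add: walk_def)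
next
  case (2 x) then show ?case by (cases ys) (auto simp: walk_Cons_Cons_iff)
next
  case (3 x y zs) then show ?case by (auto simp: walk_Cons_Cons_iff)
qed

lemma walk_rev:
  assumes sym: "\<And>x y. adj x y \<Longrightarrow> adj y x"
  shows "walk V adj xs \<Longrightarrow> walk V adj (rev xs)"
proof (induction xs rule: induct_list012)
  case 1 then show ?case by (simp add: walk_def)
next
  case (2 x) then show ?case by simp
next
  case (3 x y zs)
  have "walk V adj (rev (y # zs) @ [x])"
    by (rule walk_append) (use 3 sym in \<open>auto simp: walk_Cons_Cons_iff\<close>)
  then show ?case by simp
qed

lemma is_path_appendD2: "is_path V adj (xs @ ys) \<Longrightarrow> ys \<noteq> [] \<Longrightarrow> is_path V adj ys"
proof (induction xs)
  case Nil then show ?case by simp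
next
  case (Cons a xs)
  then show ?case by (cases "xs @ ys") (auto simp: is_path_Cons_Cons_iff)
qed

lemma walk_contains_path:
  "walk V adj xs \<Longrightarrow> \<exists>p. path_betw V adj p (hd xs) (last xs) \<and> set p \<subseteq> set xs"
proof (induction xs rule: induct_list012)
  case 1 then show ?case by (simp add: walk_def)
next
  case (2 x) then show ?case by (intro exI[of _ "[x]"]) (auto simp: path_betw_def)
next
  case (3 x y zs)
  then have w: "walk V adj (y # zs)" and x: "x \<in> V" "x = y \<or> adj x y"
    by (auto simp: walk_Cons_Cons_iff)
  from "3.IH"(2)[OF w] obtain p where
    p: "path_betw V adj p y (last (y # zs))" "set p \<subseteq> set (y # zs)" by auto
  show ?case
  proof (cases "x \<in> set p")
    case True
    then obtain p1 p2 where pp: "p = p1 @ x # p2" by (meson split_list)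
    have "is_path V adj (x # p2)" using p pp is_path_appendD2 unfolding path_betw_def by blast
    then show ?thesis using p pp
      by (intro exI[of _ "x # p2"]) (auto simp: path_betw_def)
  next
    case False
    obtain r where pr: "p = y # r" using p unfolding path_betw_def is_path_def
      by (cases p) auto
    then have "adj x y" using x False by auto
    then have "is_path V adj (x # p)" using p pr False x
      by (auto simp: is_path_Cons_Cons_iff path_betw_def)
    then show ?thesis using p pr
      by (intro exI[of _ "x # p"]) (auto simp: path_betw_def)
  qed
qed

lemma path_betw_segment:
  assumes "is_path V adj P" "j \<le> j'" "j' < length P"
  shows "path_betw V adj (take (j' - j + 1) (drop j P)) (P ! j) (P ! j')"
proof -
  let ?s = "take (j' - j + 1) (drop j P)"
  have len: "length ?s = j' - j + 1" using assms by simp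
  have nth: "\<And>n. n < length ?s \<Longrightarrow> ?s ! n = P ! (j + n)" using assms by simp
  have "is_path V adj ?s"
    unfolding is_path_def
  proof (intro conjI allI impI)
    show "?s \<noteq> []" using len by auto
    show "distinct ?s" using assms by (simp add: is_path_def)
    show "set ?s \<subseteq> V" using assms(1) unfolding is_path_def
      by (meson in_set_dropD in_set_takeD subset_iff)
    fix i assume "Suc i < length ?s"
    then show "adj (?s ! i) (?s ! Suc i)" using nth[of i] nth[of "Suc i"] assms len
      unfolding is_path_def by auto
  qed
  moreover have "hd ?s = P ! j" using assms by (simp add: hd_drop_conv_nth hd_take)
  moreover have "last ?s = P ! j'" using len nth[of "j' - j"] assms
    by (simp add: last_conv_nth)
  ultimately show ?thesis by (simp add: path_betw_def)
qed

lemma nth_mem_segment: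
  assumes "j \<le> i" "i \<le> j'" "j' < length P"
  shows "P ! i \<in> set (take (j' - j + 1) (drop j P))"
proof -
  have "take (j' - j + 1) (drop j P) ! (i - j) = P ! i" using assms by simp
  moreover have "i - j < length (take (j' - j + 1) (drop j P))" using assms by simp
  ultimately show ?thesis by (metis nth_mem)
qed

lemma tree_no_fork:
  assumes tree: "is_tree VT adj"
    and P1: "is_path VT adj (a # x # r)" and P2: "is_path VT adj (a # y # r')"
    and same_end: "last (x # r) = last (y # r')" and "x \<noteq> y"
  shows False
proof -
  have sym: "\<And>u v. adj u v \<Longrightarrow> adj v u" using tree by (simp add: is_tree_def)
  have "walk VT adj (x # r)" "walk VT adj (y # r')"
    using P1 P2 by (auto simp: is_path_Cons_Cons_iff is_path_imp_walk)
  then have "walk VT adj (x # r)" "walk VT adj (rev (y # r'))"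
    using walk_rev[of adj, OF sym] by blast+
  then have "walk VT adj ((x # r) @ rev (y # r'))"
    by (rule walk_append) (use same_end in \<open>simp add: hd_rev\<close>)
  from walk_contains_path[OF this] obtain c where
    c: "path_betw VT adj c x y" "set c \<subseteq> set (x # r) \<union> set (y # r')"
    by (auto simp: last_rev)
  have "a \<notin> set c" using c(2) P1 P2 by (auto simp: is_path_Cons_Cons_iff)
  moreover obtain c' where cc: "c = x # c'" using c(1)
    by (cases c) (auto simp: path_betw_def is_path_def)
  moreover have "c' \<noteq> []" using cc c(1) \<open>x \<noteq> y\<close> by (auto simp: path_betw_def)
  ultimately have "is_path VT adj (a # c)" "3 \<le> length (a # c)"
    using c(1) P1 by (auto simp: path_betw_def is_path_Cons_Cons_iff Suc_le_eq)
  moreover have "adj (last (a # c)) (hd (a # c))"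
    using c(1) cc P2 sym by (simp add: path_betw_def is_path_Cons_Cons_iff)
  ultimately show False using tree unfolding is_tree_def by blast
qed

lemma is_path_hd_eq_last:
  assumes "is_path V adj p" "hd p = last p" shows "p = [hd p]"
  using assms by (cases p) (auto simp: is_path_def split: if_splits)

lemma tree_path_unique:
  assumes tree: "is_tree VT adj"
  shows "path_betw VT adj p a b \<Longrightarrow> path_betw VT adj p' a b \<Longrightarrow> p = p'"
proof (induction p arbitrary: a p')
  case Nil then show ?case by (simp add: path_betw_def is_path_def)
next
  case (Cons a0 r)
  then have a0: "a0 = a" by (simp add: path_betw_def)
  obtain r' where p': "p' = a # r'" using Cons.prems
    by (cases p') (auto simp: path_betw_def is_path_def)
  show ?case
  proof (cases "r = [] \<or> r' = []")
    case True
    then have "a = b" using Cons.prems p' a0 by (auto simp: path_betw_def)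
    then show ?thesis using Cons.prems is_path_hd_eq_last unfolding path_betw_def by metis
  next
    case False
    then obtain x r1 y r1' where r: "r = x # r1" and r': "r' = y # r1'"
      by (meson neq_Nil_conv)
    have P1: "is_path VT adj (a # x # r1)" and P2: "is_path VT adj (a # y # r1')"
      and ends: "last (x # r1) = b" "last (y # r1') = b"
      using Cons.prems a0 p' r r' by (auto simp: path_betw_def)
    then have "x = y" using tree_no_fork[OF tree] by metis
    then have "r = r'"
      using Cons.IH[of x r'] P1 P2 ends r r' by (simp add: path_betw_def is_path_Cons_Cons_iff)
    then show ?thesis using a0 p' by simp
  qed
qed

lemma tree_path_subset_walk:
  assumes "is_tree VT adj" and "path_betw VT adj p a b"
    and "walk VT adj xs" "hd xs = a" "last xs = b"
  shows "set p \<subseteq> set xs"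
proof -
  obtain p' where "path_betw VT adj p' a b" "set p' \<subseteq> set xs"
    using walk_contains_path[OF assms(3)] assms(4,5) by auto
  then show ?thesis using tree_path_unique[OF assms(1,2)] by auto
qed

lemma mem_walk_eq_last:
  assumes "q \<noteq> []" "set (butlast q) \<inter> A = {}" "x \<in> set q" "x \<in> A"
  shows "x = last q"
proof -
  have "set q = insert (last q) (set (butlast q))"
    using assms(1) by (metis append_butlast_last_id list.set(2) rotate1.simps(2) set_rotate1)
  then show ?thesis using assms(2-4) by blast
qed

text \<open>
  A walk q attaches the node hd q to P ! j if it ends in P ! j and meets P nowhere else; these are
  the nodes whose bags make up Y_P besides the bags on P itself.
\<close>

lemma bag_between_attachments:
  assumes td: "tree_decomp V E ends VT adjT Y" and P: "is_path VT adjT P"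
    and q: "walk VT adjT q" "last q = P ! j" "set (butlast q) \<inter> set P = {}"
    and q': "walk VT adjT q'" "last q' = P ! j'" "set (butlast q') \<inter> set P = {}"
    and ij: "j < i" "i < j'" "j' < length P"
    and v: "v \<in> Y (hd q)" "v \<in> Y (hd q')"
  shows "v \<in> Y (P ! i)"
proof -
  have tree: "is_tree VT adjT" using td by (simp add: tree_decomp_def)
  have sym: "\<And>u v. adjT u v \<Longrightarrow> adjT v u" using tree by (simp add: is_tree_def)
  let ?s = "take (j' - j + 1) (drop j P)"
  have s: "path_betw VT adjT ?s (P ! j) (P ! j')" using path_betw_segment[OF P] ij by simp
  then have ws: "walk VT adjT ?s" and sne: "?s \<noteq> []"
    by (auto simp: path_betw_def is_path_imp_walk is_path_def)
  have ne: "q \<noteq> []" "q' \<noteq> []" using q q' by (auto simp: walk_def)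
  have wqr: "walk VT adjT (rev q)" and wq'r: "walk VT adjT (rev q')"
    using walk_rev[of adjT, OF sym] q q' by blast+
  have "walk VT adjT (?s @ rev q')"
    by (rule walk_append[OF ws wq'r]) (use s q' ne in \<open>auto simp: hd_rev path_betw_def\<close>)
  then have "walk VT adjT (q @ ?s @ rev q')"
    by (rule walk_append[OF q(1)]) (use s q sne in \<open>auto simp: path_betw_def\<close>)
  then obtain p0 where p0: "path_betw VT adjT p0 (hd q) (hd q')"
    using walk_contains_path ne sne by (fastforce simp: last_rev)
  txt \<open>Otherwise q reversed, p0 and q' form a walk from P ! j to P ! j' avoiding P ! i, although
    the unique tree path between these nodes runs along P through P ! i.\<close>
  have "P ! i \<in> set p0"
  proof (rule ccontr)
    assume nin: "P ! i \<notin> set p0"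
    have wp0: "walk VT adjT p0" and p0ne: "p0 \<noteq> []"
      using p0 by (auto simp: path_betw_def is_path_imp_walk is_path_def)
    have "walk VT adjT (p0 @ q')"
      by (rule walk_append[OF wp0 q'(1)]) (use p0 in \<open>auto simp: path_betw_def\<close>)
    then have detour: "walk VT adjT (rev q @ p0 @ q')"
      by (rule walk_append[OF wqr]) (use p0 ne p0ne in \<open>auto simp: path_betw_def last_rev\<close>)
    have "P ! i \<in> set ?s" using nth_mem_segment[of j i j' P] ij by simp
    then have "P ! i \<in> set (rev q @ p0 @ q')"
      using tree_path_subset_walk[OF tree s detour] q q' ne p0ne by (auto simp: hd_rev)
    with nin have "P ! i \<in> set q \<or> P ! i \<in> set q'" by auto
    moreover have "P ! i \<noteq> P ! j" "P ! i \<noteq> P ! j'"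
      using P ij by (auto simp: is_path_def nth_eq_iff_index_eq)
    ultimately show False
      using mem_walk_eq_last[OF ne(1) q(3)] mem_walk_eq_last[OF ne(2) q'(3)] q(2) q'(2) ij
      by (metis nth_mem order.strict_trans)
  qed
  then show ?thesis using td p0 v unfolding tree_decomp_def by blast
qed

lemma mem_YP_attached:
  assumes "v \<in> YP VT adjT Y P a b" "b < length P" "is_path VT adjT P"
  obtains q j where "a \<le> j" "j \<le> b" "walk VT adjT q" "last q = P ! j"
    "set (butlast q) \<inter> set P = {}" "v \<in> Y (hd q)"
  using assms(1) unfolding YP_def
proof (elim UnE)
  assume "v \<in> (\<Union>j\<in>{a..b}. Y (P ! j))"
  then obtain j where j: "j \<in> {a..b}" "v \<in> Y (P ! j)" by auto
  have "P ! j \<in> VT" using assms j by (auto simp: is_path_def)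
  then show thesis using j that[of j "[P ! j]"] by auto
next
  assume "v \<in> (\<Union>t\<in>{t. t \<in> VT \<and> t \<notin> set P \<and>
        (\<exists>q j. a \<le> j \<and> j < b \<and> path_betw VT adjT q t (P ! j) \<and> set (butlast q) \<inter> set P = {})}. Y t)"
  then obtain t q j where "v \<in> Y t" "a \<le> j" "j < b" "path_betw VT adjT q t (P ! j)"
    "set (butlast q) \<inter> set P = {}"
    by blast
  then show thesis using that[of j q] by (auto simp: path_betw_def is_path_imp_walk)
qed

lemma YP_inter_subset_bag:
  assumes td: "tree_decomp V E ends VT adjT Y" and P: "is_path VT adjT P"
    and "b < i" "i < a'" "a' \<le> b'" "b' < length P"
  shows "YP VT adjT Y P a b \<inter> YP VT adjT Y P a' b' \<subseteq> Y (P ! i)"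
proof
  fix v assume v: "v \<in> YP VT adjT Y P a b \<inter> YP VT adjT Y P a' b'"
  have "b < length P" using assms by linarith
  then obtain q j where q: "j \<le> b" "walk VT adjT q" "last q = P ! j"
    "set (butlast q) \<inter> set P = {}" "v \<in> Y (hd q)"
    using mem_YP_attached[of v] v P by blast
  obtain q' j' where q': "a' \<le> j'" "j' \<le> b'" "walk VT adjT q'" "last q' = P ! j'"
    "set (butlast q') \<inter> set P = {}" "v \<in> Y (hd q')"
    using mem_YP_attached[of v] v P assms(6) by blast
  show "v \<in> Y (P ! i)"
    by (rule bag_between_attachments[OF td P q(2-4) q'(3-5)]) (use assms q q' in auto)
qed

lemma card_nbhd_le:
  assumes mg: "multigraph V E ends" and deg: "\<forall>v\<in>V. degree E ends v \<le> d"
    and UV: "U \<subseteq> V" and fU: "finite U"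
  shows "card (nbhd V E ends U) \<le> 2 * d * card U"
proof -
  let ?S = "\<lambda>u. {e\<in>E. u \<in> ends e}"
  have fE: "finite E" and c2: "\<And>e. e \<in> E \<Longrightarrow> card (ends e) = 2"
    using mg by (auto simp: multigraph_def)
  then have fin: "\<And>e. e \<in> E \<Longrightarrow> finite (ends e)" by (metis card.infinite zero_neq_numeral)
  have finS: "\<And>u. finite (?S u)" using fE by simp
  have "card (nbhd V E ends U) \<le> card (\<Union>u\<in>U. \<Union>e\<in>?S u. ends e)"
    by (rule card_mono) (use fU finS fin in \<open>force simp: nbhd_def gadj_def\<close>)+
  also have "\<dots> \<le> (\<Sum>u\<in>U. card (\<Union>e\<in>?S u. ends e))" by (rule card_UN_le[OF fU])
  also have "\<dots> \<le> (\<Sum>u\<in>U. 2 * d)"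
  proof (rule sum_mono)
    fix u assume u: "u \<in> U"
    have "card (\<Union>e\<in>?S u. ends e) \<le> (\<Sum>e\<in>?S u. card (ends e))" by (rule card_UN_le[OF finS])
    also have "\<dots> = 2 * card (?S u)" using c2 by simp
    also have "card (?S u) \<le> d" using deg u UV by (auto simp: degree_def)
    finally show "card (\<Union>e\<in>?S u. ends e) \<le> 2 * d" by simp
  qed
  finally show ?thesis by (simp add: mult.commute)
qed

lemma ex_avoiding_of_pairwise_disjoint:
  assumes "finite N" "card N \<le> D"
    and disj: "\<And>c c'. c < c' \<Longrightarrow> c' \<le> D \<Longrightarrow> N \<inter> W c \<inter> W c' = {}"
  shows "\<exists>c\<le>D. N \<inter> W c = {}"
proof (rule ccontr)
  assume "\<not> ?thesis"
  then have "\<forall>c\<in>{0..D}. \<exists>x. x \<in> N \<inter> W c" by auto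
  then obtain g where g: "\<And>c. c \<in> {0..D} \<Longrightarrow> g c \<in> N \<inter> W c" by metis
  have "inj_on g {0..D}"
  proof (rule inj_onI)
    fix c c' assume c: "c \<in> {0..D}" "c' \<in> {0..D}" and eq: "g c = g c'"
    have in_both: "g c \<in> N \<inter> W c \<inter> W c'" using g[OF c(1)] g[OF c(2)] eq by simp
    show "c = c'"
    proof (rule linorder_cases)
      assume "c < c'"
      then show ?thesis using disj[of c c'] c in_both by auto
    next
      assume "c' < c"
      then show ?thesis using disj[of c' c] c in_both by auto
    qed
  qed
  then have "card {0..D} \<le> card N" using g assms(1) by (intro card_inj_on_le) auto
  then show False using assms(2) by simp
qed

lemma YP_windows_inter_subset:
  fixes idx :: "nat \<Rightarrow> nat"
  assumes td: "tree_decomp V E ends VT adjT Y" and P: "is_path VT adjT P"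
    and idx_lt: "\<forall>i\<in>{1..n}. idx i < length P"
    and idx_mono: "\<forall>i j. 1 \<le> i \<and> i < j \<and> j \<le> n \<longrightarrow> idx i < idx j"
    and bags_inter: "\<forall>i\<in>{1..n}. \<forall>j\<in>{1..n}. i \<noteq> j \<longrightarrow> Y (P ! idx i) \<inter> Y (P ! idx j) = U"
    and "0 < m" "k + m + 2 \<le> k'" "k' + m \<le> n"
  shows "YP VT adjT Y P (idx (k + 1)) (idx (k + m)) \<inter> YP VT adjT Y P (idx (k' + 1)) (idx (k' + m))
    \<subseteq> U"
proof -
  let ?i = "k + m + 1" and ?j = "k + m + 2"
  let ?A = "YP VT adjT Y P (idx (k + 1)) (idx (k + m))"
    and ?B = "YP VT adjT Y P (idx (k' + 1)) (idx (k' + m))"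
  have mono: "idx i < idx j" if "1 \<le> i" "i < j" "j \<le> n" for i j
    using idx_mono that by blast
  have lt: "idx (k + m) < idx ?i" "idx ?i < idx ?j" "idx ?j < idx (k' + 1)"
    using mono[of "k + m" ?i] mono[of ?i ?j] mono[of ?j "k' + 1"] assms(6-8) by simp_all
  have le: "idx (k' + 1) \<le> idx (k' + m)"
    using mono[of "k' + 1" "k' + m"] assms(6-8) by (cases "m = 1") simp_all
  have len: "idx (k' + m) < length P" using idx_lt assms(6-8) by simp
  have "?A \<inter> ?B \<subseteq> Y (P ! idx ?i)"
    by (rule YP_inter_subset_bag[OF td P]) (use lt le len in linarith)+
  moreover have "?A \<inter> ?B \<subseteq> Y (P ! idx ?j)"
    by (rule YP_inter_subset_bag[OF td P]) (use lt le len in linarith)+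
  moreover have "?i \<in> {1..n}" "?j \<in> {1..n}" using assms(7,8) by simp_all
  then have "Y (P ! idx ?i) \<inter> Y (P ! idx ?j) = U" using bags_inter by simp
  ultimately show ?thesis by blast
qed

theorem ex_window_avoiding_nbhd:
  fixes idx :: "nat \<Rightarrow> nat"
  assumes mg: "multigraph V E ends" and deg: "\<forall>v\<in>V. degree E ends v \<le> d"
    and td: "tree_decomp V E ends VT adjT Y" and width: "\<forall>t\<in>VT. card (Y t) \<le> w + 1"
    and P: "is_path VT adjT P" and "0 < m"
    and long: "(2 * d * (w + 1) + 1) * (m + 2) \<le> n"
    and idx_lt: "\<forall>i\<in>{1..n}. idx i < length P"
    and idx_mono: "\<forall>i j. 1 \<le> i \<and> i < j \<and> j \<le> n \<longrightarrow> idx i < idx j"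
    and bags_inter: "\<forall>i\<in>{1..n}. \<forall>j\<in>{1..n}. i \<noteq> j \<longrightarrow> Y (P ! idx i) \<inter> Y (P ! idx j) = U"
  shows "\<exists>k. k + m \<le> n \<and> nbhd V E ends U \<inter> (YP VT adjT Y P (idx (k + 1)) (idx (k + m)) - U) = {}"
proof -
  let ?D = "2 * d * (w + 1)" and ?N = "nbhd V E ends U"
  define window where "window c = YP VT adjT Y P (idx (c * (m + 2) + 1)) (idx (c * (m + 2) + m)) - U"
    for c
  have block_le: "c * (m + 2) + m + 2 \<le> n" if "c \<le> ?D" for c
  proof -
    have "(c + 1) * (m + 2) \<le> (?D + 1) * (m + 2)" using that by (intro mult_right_mono) auto
    moreover have "c * (m + 2) + m + 2 = (c + 1) * (m + 2)" by simp
    ultimately show ?thesis using long by linarith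
  qed
  have "1 \<in> {1..n}" "2 \<in> {1..n}" using block_le[of 0] by simp_all
  then have U_eq: "Y (P ! idx 1) \<inter> Y (P ! idx 2) = U" and t1: "P ! idx 1 \<in> VT"
    using bags_inter idx_lt P by (auto simp: is_path_def)
  then have Y1: "Y (P ! idx 1) \<subseteq> V" "card (Y (P ! idx 1)) \<le> w + 1"
    using td width unfolding tree_decomp_def by blast+
  then have fin_Y1: "finite (Y (P ! idx 1))" using mg finite_subset by (auto simp: multigraph_def)
  have U1: "U \<subseteq> Y (P ! idx 1)" using U_eq by blast
  have "card ?N \<le> 2 * d * card U"
    by (rule card_nbhd_le[OF mg deg]) (use U1 Y1 fin_Y1 in \<open>auto intro: finite_subset\<close>)
  also have "\<dots> \<le> ?D" using card_mono[OF fin_Y1 U1] Y1(2) by (intro mult_le_mono2) linarith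
  finally have "card ?N \<le> ?D" .
  moreover have "finite ?N" using mg by (simp add: nbhd_def multigraph_def)
  moreover have "?N \<inter> window c \<inter> window c' = {}" if "c < c'" "c' \<le> ?D" for c c'
  proof -
    have "(c + 1) * (m + 2) \<le> c' * (m + 2)" using that by (intro mult_right_mono) auto
    then have "c * (m + 2) + m + 2 \<le> c' * (m + 2)" by simp
    then have "YP VT adjT Y P (idx (c * (m + 2) + 1)) (idx (c * (m + 2) + m)) \<inter>
        YP VT adjT Y P (idx (c' * (m + 2) + 1)) (idx (c' * (m + 2) + m)) \<subseteq> U"
      using block_le[OF that(2)]
      by (intro YP_windows_inter_subset[OF td P idx_lt idx_mono bags_inter \<open>0 < m\<close>]) simp_all
    then show ?thesis unfolding window_def by blast
  qed
  ultimately obtain c where "c \<le> ?D" "?N \<inter> window c = {}"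
    using ex_avoiding_of_pairwise_disjoint[of ?N ?D window] by blast
  then show ?thesis unfolding window_def using block_le[of c] by (intro exI[of _ "c * (m + 2)"]) simp
qed

theorem lemma6p6:
  fixes m w d :: nat
  assumes "1 < m" and "0 < w" and "0 < d"
  shows "\<exists>\<gamma>::nat. \<forall>(V::nat set) (E::nat set) (ends::nat \<Rightarrow> nat set) (VT::nat set)
      (adjT::nat \<Rightarrow> nat \<Rightarrow> bool) (Y::nat \<Rightarrow> nat set) (P::nat list) (\<gamma>'::nat)
      (idx::nat \<Rightarrow> nat) (s::nat) (U::nat set).
      multigraph V E ends \<and> connected_graph V (gadj E ends) \<and>
      (\<forall>v\<in>V. degree E ends v \<le> d) \<and>
      lean_tree_decomp V E ends VT adjT Y \<and> (\<forall>t\<in>VT. card (Y t) \<le> w + 1) \<and>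
      is_path VT adjT P \<and>
      \<gamma> \<le> \<gamma>' \<and>
      (\<forall>i\<in>{1..\<gamma>'}. 0 < idx i \<and> idx i < length P - 1) \<and>
      (\<forall>i j. 1 \<le> i \<and> i < j \<and> j \<le> \<gamma>' \<longrightarrow> idx i < idx j) \<and>
      0 < s \<and>
      (\<forall>i\<in>{1..\<gamma>'}. card (Y (P ! idx i)) = s) \<and>
      (\<forall>j. idx 1 \<le> j \<and> j \<le> idx \<gamma>' \<longrightarrow> s \<le> card (Y (P ! j))) \<and>
      (\<forall>i\<in>{1..\<gamma>'}. \<forall>j\<in>{1..\<gamma>'}. i \<noteq> j \<longrightarrow> Y (P ! idx i) \<inter> Y (P ! idx j) = U)
      \<longrightarrow> (\<exists>k. k + m \<le> \<gamma>' \<and>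
             nbhd V E ends U \<inter> (YP VT adjT Y P (idx (k + 1)) (idx (k + m)) - U) = {})"
  by (rule exI[of _ "(2 * d * (w + 1) + 1) * (m + 2)"], intro allI impI, elim conjE,
      rule ex_window_avoiding_nbhd)
    (use assms(1) in \<open>simp_all add: lean_tree_decomp_def,
      meson atLeastAtMost_iff diff_le_self order.strict_trans2\<close>)

end
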